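(* Let $(x_n,y_n)_{n\in\mathbb Z}$ and $(x'_n,y'_n)_{n\in\mathbb Z}$ be two elliptic sequences in general position on the same biquadratic polynomial $F$, let $a\ne0$ and suppose $x'_0-x'_{-1}=2/a$. Let $f$ be defined on $\{x_n:n\ge0\}$ with $f(x_0)=c_0\ne0$ and $(\mathcal Df)(y_n)=a(\mathcal Mf)(y_n)$ for $n\ge0$, i.e. $f(x_{n+1})=\frac{1+a(x_{n+1}-x_n)/2}{1-a(x_{n+1}-x_n)/2}f(x_n)$ (assume $a(x_{n+1}-x_n)\ne2$). Let $(c_n)_{n\ge0}$ be the unique coefficients such that for every $N$ the sum $\sum_{n=0}^Nc_n\frac{(x-x_0)\cdots(x-x_{n-1})}{(x-x'_0)\cdots(x-x'_{n-1})}$ interpolates $f$ at $x_0,\dots,x_N$. Then for all $n\ge0$ $$c_n=\frac{x_n-x'_{n-1}}{x_0-x'_{-1}}\,\eta_0\eta_1\cdots\eta_{n-1}\,c_0,\qquad \eta_j=\frac{(x_j-x'_{-1})\big(1+a(x'_j-x'_{j-1})/2\big)}{(x'_j-x'_{-1})\big(1-a(x_{j+1}-x_j)/2\big)},$$ equivalently $\dfrac{c_{n+1}}{c_n}=\dfrac{(x_n-x'_{-1})(1+a(x'_n-x'_{n-1})/2)(x_{n+1}-x'_n)}{(x'_n-x'_{-1})(1-a(x_{n+1}-x_n)/2)(x_n-x'_{n-1})}$ for $n\ge1$.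
   Context: $F(x,y)=\sum_{i,j=0}^2c_{i,j}x^iy^j$ biquadratic. An elliptic sequence on $F$ is $(x_n,y_n)_{n\in\mathbb Z}$ such that for every $n$, $x_n,x_{n+1}$ are the two roots of $F(\cdot,y_n)$ and $y_{n-1},y_n$ the two roots of $F(x_n,\cdot)$; general position means all $x_n,x'_n$ distinct and all $y_n,y'_n$ distinct, with the leading coefficients $X_2(x)=\sum_ic_{i,2}x^i$, $Y_2(y)=\sum_jc_{2,j}y^j$ nonvanishing at these points. $(\mathcal Df)(y_n)=\frac{f(x_{n+1})-f(x_n)}{x_{n+1}-x_n}$, $(\mathcal Mf)(y_n)=\frac{f(x_n)+f(x_{n+1})}2$. Empty products equal $1$. *)

theory Defs
  imports Complex_Main
begin

definition biquad :: "(nat \<Rightarrow> nat \<Rightarrow> complex) \<Rightarrow> complex \<Rightarrow> complex \<Rightarrow> complex" where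
  "biquad C u v = (\<Sum>i\<le>2. \<Sum>j\<le>2. C i j * u ^ i * v ^ j)"

definition X2 :: "(nat \<Rightarrow> nat \<Rightarrow> complex) \<Rightarrow> complex \<Rightarrow> complex" where
  "X2 C u = (\<Sum>i\<le>2. C i 2 * u ^ i)"

definition Y2 :: "(nat \<Rightarrow> nat \<Rightarrow> complex) \<Rightarrow> complex \<Rightarrow> complex" where
  "Y2 C v = (\<Sum>j\<le>2. C 2 j * v ^ j)"

definition elliptic_seq :: "(nat \<Rightarrow> nat \<Rightarrow> complex) \<Rightarrow> (int \<Rightarrow> complex) \<Rightarrow> (int \<Rightarrow> complex) \<Rightarrow> bool" where
  "elliptic_seq C x y \<longleftrightarrow>
     (\<forall>n. (\<forall>t. biquad C t (y n) = Y2 C (y n) * (t - x n) * (t - x (n + 1))) \<and>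
          (\<forall>s. biquad C (x n) s = X2 C (x n) * (s - y (n - 1)) * (s - y n)))"

definition general_position ::
  "(nat \<Rightarrow> nat \<Rightarrow> complex) \<Rightarrow> (int \<Rightarrow> complex) \<Rightarrow> (int \<Rightarrow> complex) \<Rightarrow>
   (int \<Rightarrow> complex) \<Rightarrow> (int \<Rightarrow> complex) \<Rightarrow> bool" where
  "general_position C x y x' y' \<longleftrightarrow>
     inj x \<and> inj x' \<and> range x \<inter> range x' = {} \<and>
     inj y \<and> inj y' \<and> range y \<inter> range y' = {} \<and>
     (\<forall>n. X2 C (x n) \<noteq> 0 \<and> X2 C (x' n) \<noteq> 0 \<and> Y2 C (y n) \<noteq> 0 \<and> Y2 C (y' n) \<noteq> 0)"

text \<open>Divided difference and mean operators along (x,y), evaluated at y_n.\<close>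
definition Dop :: "(int \<Rightarrow> complex) \<Rightarrow> (complex \<Rightarrow> complex) \<Rightarrow> int \<Rightarrow> complex" where
  "Dop x f n = (f (x (n + 1)) - f (x n)) / (x (n + 1) - x n)"

definition Mop :: "(int \<Rightarrow> complex) \<Rightarrow> (complex \<Rightarrow> complex) \<Rightarrow> int \<Rightarrow> complex" where
  "Mop x f n = (f (x n) + f (x (n + 1))) / 2"

end

theory Submission
  imports Defs "HOL-Computational_Algebra.Polynomial"
begin

text \<open>
  Write \<open>basis n t = \<Prod>i<n. (t - x i) / (t - x' i)\<close>. Since
  \<open>(1 - a d\<^sub>m / 2) f (x (m + 1)) = (1 + a d\<^sub>m / 2) f (x m)\<close> with \<open>d\<^sub>m = x (m + 1) - x m\<close>
  determines \<open>f\<close> on the nodes from \<open>f (x 0)\<close>, and the interpolation conditions are a lower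
  triangular system for the \<open>c n\<close>, it suffices to show that \<open>\<Sum>n. closed_coeff n * basis n\<close>
  satisfies the same recurrence.

  For fixed \<open>n\<close>, the defect \<open>(1 - a d\<^sub>m / 2) basis n (x (m + 1)) - (1 + a d\<^sub>m / 2) basis n (x m)\<close>
  times \<open>\<Prod>i<n. Y2 (y m) (x m - x' i) (x (m + 1) - x' i)\<close> is \<open>d\<^sub>m Phi n (y m)\<close>: a product over
  the two roots of \<open>F(-, y m)\<close> is a norm, hence a polynomial \<open>Phi n\<close> of degree \<open>2 n\<close> in \<open>y m\<close>.
  It vanishes at \<open>y j, y' j\<close> for \<open>j < n - 1\<close> and, because \<open>x' 0 - x' (-1) = 2 / a\<close>, at
  \<open>y' (-1)\<close>, which leaves a linear factor \<open>ell (n - 1)\<close>. Its partial fractions write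
  \<open>c n\<close> times the defect as \<open>d\<^sub>m (W (n + 1) s\<^sub>n - W n s\<^sub>n\<^sub>-\<^sub>1)\<close> evaluated at \<open>y m\<close>, where
  \<open>s\<^sub>n = ybasis n\<close>. The closed form of \<open>c n\<close> is exactly what makes the weights \<open>W\<close> of
  consecutive \<open>n\<close> agree, so the sum over \<open>n \<le> m + 1\<close> telescopes to zero, as
  \<open>ybasis (m + 1) (y m) = 0\<close>.
\<close>

lemma prod_linear_factors_dvd:
  fixes p :: "'a::idom poly"
  assumes "finite A" and "\<And>a. a \<in> A \<Longrightarrow> poly p a = 0"
  shows "(\<Prod>a\<in>A. [:-a, 1:]) dvd p"
  using assms
proof (induction A arbitrary: p rule: finite_induct)
  case empty
  then show ?case by simp
next
  case (insert a A)
  obtain p1 where p1: "p = [:-a, 1:] * p1"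
    using insert.prems poly_eq_0_iff_dvd by blast
  have "poly p1 b = 0" if "b \<in> A" for b
  proof -
    have "(b - a) * poly p1 b = 0"
      using insert.prems[of b] that unfolding p1 poly_mult by simp
    moreover have "b \<noteq> a" using that insert.hyps(2) by blast
    ultimately show ?thesis by simp
  qed
  then have "(\<Prod>b\<in>A. [:-b, 1:]) dvd p1" by (rule insert.IH)
  then show ?case
    unfolding p1 prod.insert[OF insert.hyps] by (rule mult_dvd_mono[OF dvd_refl])
qed

lemma factor_out_roots:
  fixes p :: "'a::idom poly"
  assumes "finite A" and "\<And>a. a \<in> A \<Longrightarrow> poly p a = 0" and "degree p \<le> card A + e"
  obtains q where "degree q \<le> e" and "p = q * (\<Prod>a\<in>A. [:-a, 1:])"
proof -
  obtain q where q: "p = (\<Prod>a\<in>A. [:-a, 1:]) * q"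
    using prod_linear_factors_dvd[OF assms(1,2)] by blast
  have "degree q \<le> e"
  proof (cases "q = 0")
    case False
    have "degree p = card A + degree q"
      unfolding q using False \<open>finite A\<close>
      by (subst degree_mult_eq) (auto simp: degree_prod_eq_sum_degree)
    then show ?thesis using assms(3) by simp
  qed simp
  with q show thesis using that by (simp add: mult.commute)
qed

lemma poly_linear_interpolation:
  fixes q :: "'a::comm_ring_1 poly"
  assumes "degree q \<le> 1"
  shows "poly q z * (s - r) = poly q s * (z - r) - poly q r * (z - s)"
proof -
  have "q = [:coeff q 0, coeff q 1:]"
    using assms by (intro poly_eqI) (auto simp: coeff_pCons coeff_eq_0 split: nat.split)
  then have "poly q t = coeff q 0 + coeff q 1 * t" for t
    by (metis mult.commute poly_pCons poly_0 add_0_right mult_zero_right)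
  then show ?thesis by (simp add: algebra_simps)
qed

lemma lower_triangular_solution_unique:
  fixes R :: "nat \<Rightarrow> nat \<Rightarrow> 'a::idom"
  assumes diag: "\<And>n. R n n \<noteq> 0"
    and eq: "\<And>k. (\<Sum>n\<le>k. c n * R n k) = (\<Sum>n\<le>k. d n * R n k)"
  shows "c k = d k"
proof (induction k rule: less_induct)
  case (less k)
  have "(\<Sum>n<k. c n * R n k) = (\<Sum>n<k. d n * R n k)"
    using less.IH by simp
  then have "c k * R k k = d k * R k k"
    using eq[of k] by (simp add: lessThan_Suc_atMost[symmetric])
  then show ?case using diag[of k] by simp
qed

section \<open>Norm polynomials of a biquadratic\<close>

definition ycoeff :: "(nat \<Rightarrow> nat \<Rightarrow> complex) \<Rightarrow> nat \<Rightarrow> complex poly" where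
  "ycoeff C i = [:C i 0, C i 1, C i 2:]"

lemma poly_ycoeff: "poly (ycoeff C i) v = C i 0 + C i 1 * v + C i 2 * v\<^sup>2"
  by (simp add: ycoeff_def algebra_simps power2_eq_square)

lemma degree_ycoeff: "degree (ycoeff C i) \<le> 2"
  by (simp add: ycoeff_def degree_pCons_eq_if)

lemma poly_ycoeff_2 [simp]: "poly (ycoeff C 2) v = Y2 C v"
  by (simp add: Y2_def poly_ycoeff numeral_2_eq_2 atMost_Suc)

lemma biquad_eq_ycoeff:
  "biquad C t v = poly (ycoeff C 0) v + poly (ycoeff C 1) v * t + Y2 C v * t\<^sup>2"
  by (simp add: biquad_def Y2_def poly_ycoeff numeral_2_eq_2 atMost_Suc algebra_simps)

lemma biquad_vieta:
  assumes "\<And>t. biquad C t z = Y2 C z * (t - u) * (t - v)"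
  shows "poly (ycoeff C 0) z = Y2 C z * u * v" and "poly (ycoeff C 1) z = - Y2 C z * (u + v)"
proof -
  show "poly (ycoeff C 0) z = Y2 C z * u * v"
    using assms[of 0] by (simp add: biquad_eq_ycoeff)
  then have "poly (ycoeff C 1) z + Y2 C z * (u + v) = 0"
    using assms[of 1] by (simp add: biquad_eq_ycoeff algebra_simps)
  then show "poly (ycoeff C 1) z = - Y2 C z * (u + v)"
    by (simp add: eq_neg_iff_add_eq_0)
qed

locale norm_polys =
  fixes Y0 Y1 Y2 :: "'a::field_char_0 poly" and p q :: "nat \<Rightarrow> 'a"
  assumes degree_Y: "degree Y0 \<le> 2" "degree Y1 \<le> 2" "degree Y2 \<le> 2"
begin

definition roots_at :: "'a \<Rightarrow> 'a \<Rightarrow> 'a \<Rightarrow> bool" where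
  "roots_at z u v \<longleftrightarrow> poly Y0 z = poly Y2 z * u * v \<and> poly Y1 z = - poly Y2 z * (u + v)"

lemma roots_at_commute: "roots_at z u v \<longleftrightarrow> roots_at z v u"
  by (auto simp: roots_at_def algebra_simps)

definition polar :: "nat \<Rightarrow> 'a poly" where
  "polar n = Y0 + smult ((p n + q n) / 2) Y1 + smult (p n * q n) Y2"

definition Delta :: "'a poly" where
  "Delta = Y0 * Y2 - smult (1/4) (Y1 * Y1)"

text \<open>If \<open>u, v\<close> are the roots of \<open>Y0(z) + Y1(z) t + Y2(z) t\<^sup>2\<close>, put \<open>w = Y2(z) (v - u) / 2\<close>,
  so that \<open>w\<^sup>2 = - Delta(z)\<close>. Then \<open>sigma n + tau n w\<close> evaluates to
  \<open>\<Prod>i<n. Y2(z) (u - q i) (v - p i)\<close>, and the recursion below is multiplication by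
  \<open>polar n + (p n - q n) w = Y2(z) (u - q n) (v - p n)\<close>.\<close>
fun tau :: "nat \<Rightarrow> 'a poly" and sigma :: "nat \<Rightarrow> 'a poly" where
  "tau 0 = 0"
| "tau (Suc n) = polar n * tau n + smult (p n - q n) (sigma n)"
| "sigma 0 = 1"
| "sigma (Suc n) = polar n * sigma n - smult (p n - q n) (Delta * tau n)"

declare tau.simps(2) [simp del] sigma.simps(2) [simp del]

lemma poly_polar_at_roots:
  assumes "roots_at z u v"
  shows "poly (polar n) z + (p n - q n) * (poly Y2 z * (v - u) / 2) =
         poly Y2 z * (u - q n) * (v - p n)"
proof -
  from assms have Y0: "poly Y0 z = poly Y2 z * u * v" and Y1: "poly Y1 z = - poly Y2 z * (u + v)"
    by (simp_all add: roots_at_def)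
  show ?thesis
    unfolding polar_def poly_add poly_smult Y0 Y1 by (simp add: field_simps)
qed

lemma poly_Delta_at_roots:
  assumes "roots_at z u v"
  shows "poly Delta z = - (poly Y2 z * (v - u) / 2)\<^sup>2"
proof -
  from assms have Y0: "poly Y0 z = poly Y2 z * u * v" and Y1: "poly Y1 z = - poly Y2 z * (u + v)"
    by (simp_all add: roots_at_def)
  show ?thesis
    unfolding Delta_def poly_diff poly_mult poly_smult Y0 Y1 by (simp add: field_simps power2_eq_square)
qed

lemma norm_identity:
  assumes "roots_at z u v"
  shows "poly (sigma n) z + poly (tau n) z * (poly Y2 z * (v - u) / 2) =
         (\<Prod>i<n. poly Y2 z * (u - q i) * (v - p i))"
proof (induction n)
  case 0
  then show ?case by simp
next
  case (Suc n)
  define w where "w = poly Y2 z * (v - u) / 2"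
  have Delta: "poly Delta z = - (w * w)"
    using poly_Delta_at_roots[OF assms] by (simp add: w_def power2_eq_square)
  have "poly (sigma (Suc n)) z + poly (tau (Suc n)) z * w =
        (poly (polar n) z + (p n - q n) * w) * (poly (sigma n) z + poly (tau n) z * w)"
    unfolding tau.simps sigma.simps poly_add poly_diff poly_mult poly_smult Delta
    by (simp add: algebra_simps)
  also have "\<dots> = poly Y2 z * (u - q n) * (v - p n) * (\<Prod>i<n. poly Y2 z * (u - q i) * (v - p i))"
    using poly_polar_at_roots[OF assms, of n] Suc.IH by (simp add: w_def)
  finally show ?case by (simp add: w_def mult.commute)
qed

lemma sigma_at_roots:
  assumes "roots_at z u v" and "i < n" and "u = q i \<or> v = p i"
  shows "poly (sigma n) z = poly (tau n) z * (poly Y2 z * (u - v) / 2)"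
proof -
  have "(\<Prod>i<n. poly Y2 z * (u - q i) * (v - p i)) = 0"
    using assms(2,3) by (subst prod_zero_iff) auto
  then show ?thesis
    using norm_identity[OF assms(1), of n] by (simp add: field_simps)
qed

lemma tau_sigma_vanish_at_roots:
  assumes "roots_at z u v" and "u \<noteq> v" and "poly Y2 z \<noteq> 0"
    and "\<exists>i<n. u = q i \<or> v = p i" and "\<exists>i<n. v = q i \<or> u = p i"
  shows "poly (tau n) z = 0" and "poly (sigma n) z = 0"
proof -
  have "poly (sigma n) z = poly (tau n) z * (poly Y2 z * (u - v) / 2)"
    using assms(1,4) sigma_at_roots by blast
  moreover have "poly (sigma n) z = poly (tau n) z * (poly Y2 z * (v - u) / 2)"
    using assms(1,5) sigma_at_roots roots_at_commute by blast
  ultimately show "poly (tau n) z = 0"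
    using assms(2,3) by (simp add: field_simps)
  then show "poly (sigma n) z = 0"
    using \<open>poly (sigma n) z = _ * (poly Y2 z * (u - v) / 2)\<close> by simp
qed

lemma tau_Suc_at_roots:
  assumes "roots_at z u v"
    and "poly (sigma n) z = poly (tau n) z * (poly Y2 z * (v - u) / 2)"
  shows "poly (tau (Suc n)) z = poly (tau n) z * (poly Y2 z * (u - q n) * (v - p n))"
proof -
  have "poly (tau (Suc n)) z = poly (tau n) z * (poly (polar n) z + (p n - q n) * (poly Y2 z * (v - u) / 2))"
    unfolding tau.simps poly_add poly_mult poly_smult assms(2) by (simp add: algebra_simps)
  then show ?thesis
    unfolding poly_polar_at_roots[OF assms(1)] .
qed

lemma degree_tau_sigma: "degree (tau (Suc n)) \<le> 2 * n \<and> degree (sigma (Suc n)) \<le> 2 * n + 2"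
proof -
  have degree_polar: "degree (polar n) \<le> 2" for n
    unfolding polar_def using degree_Y
    by (intro degree_add_le order.trans[OF degree_smult_le]) auto
  have degree_Delta: "degree Delta \<le> 4"
    unfolding Delta_def using degree_Y degree_mult_le[of Y0 Y2] degree_mult_le[of Y1 Y1]
    by (intro degree_diff_le order.trans[OF degree_smult_le]) auto
  have mult_le: "degree f \<le> i \<Longrightarrow> degree g \<le> j \<Longrightarrow> degree (f * g) \<le> i + j" for f g :: "'a poly" and i j
    using degree_mult_le[of f g] by linarith
  show ?thesis
  proof (induction n)
    case 0
    then show ?case using degree_polar[of 0] by (simp add: tau.simps(2) sigma.simps(2) degree_smult_le)
  next
    case (Suc n)
    have "degree (polar (Suc n) * tau (Suc n)) \<le> 2 + 2 * n"
      "degree (polar (Suc n) * sigma (Suc n)) \<le> 2 + (2 * n + 2)"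
      "degree (Delta * tau (Suc n)) \<le> 4 + 2 * n"
      using Suc.IH mult_le[OF degree_polar] mult_le[OF degree_Delta] by blast+
    then show ?case
      using Suc.IH unfolding tau.simps(2)[of "Suc n"] sigma.simps(2)[of "Suc n"]
      by (auto intro!: degree_add_le degree_diff_le order.trans[OF degree_smult_le])
  qed
qed

end

section \<open>A pair of elliptic sequences\<close>

locale elliptic_pair =
  fixes C :: "nat \<Rightarrow> nat \<Rightarrow> complex" and x y x' y' :: "int \<Rightarrow> complex"
  assumes elliptic: "elliptic_seq C x y" and elliptic': "elliptic_seq C x' y'"
    and general_position: "general_position C x y x' y'"
begin

lemma biquad_at_y: "biquad C t (y m) = Y2 C (y m) * (t - x m) * (t - x (m + 1))"
  and biquad_at_x: "biquad C (x n) s = X2 C (x n) * (s - y (n - 1)) * (s - y n)"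
  and biquad_at_y': "biquad C t (y' m) = Y2 C (y' m) * (t - x' m) * (t - x' (m + 1))"
  and biquad_at_x': "biquad C (x' n) s = X2 C (x' n) * (s - y' (n - 1)) * (s - y' n)"
  using elliptic elliptic' unfolding elliptic_seq_def by blast+

lemma x_eq_iff [simp]: "x i = x j \<longleftrightarrow> i = j"
  and x'_eq_iff [simp]: "x' i = x' j \<longleftrightarrow> i = j"
  and y_eq_iff [simp]: "y i = y j \<longleftrightarrow> i = j"
  and y'_eq_iff [simp]: "y' i = y' j \<longleftrightarrow> i = j"
  using general_position unfolding general_position_def by (auto dest: injD)

lemma x_ne_x' [simp]: "x i \<noteq> x' j" "x' j \<noteq> x i"
  and y_ne_y' [simp]: "y i \<noteq> y' j" "y' j \<noteq> y i"
  using general_position unfolding general_position_def by (metis disjoint_iff rangeI)+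

lemma X2_nonzero [simp]: "X2 C (x n) \<noteq> 0" "X2 C (x' n) \<noteq> 0"
  and Y2_nonzero [simp]: "Y2 C (y n) \<noteq> 0" "Y2 C (y' n) \<noteq> 0"
  using general_position unfolding general_position_def by blast+

text \<open>Both sides equal \<open>F(x m, y' n)\<close>, factored once as a quadratic in \<open>x\<close> and once in \<open>y\<close>.\<close>
lemma Y2_X2_cross:
  "Y2 C (y' n) * (x m - x' n) * (x m - x' (n + 1)) = X2 C (x m) * (y' n - y (m - 1)) * (y' n - y m)"
  using biquad_at_y'[of "x m" n] biquad_at_x[of m "y' n"] by simp

lemma Y2_X2_cross':
  "Y2 C (y n) * (x' m - x n) * (x' m - x (n + 1)) = X2 C (x' m) * (y n - y' (m - 1)) * (y n - y' m)"
  using biquad_at_y[of "x' m" n] biquad_at_x'[of m "y n"] by simp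

(* Suc 0 rather than 1, which the simplifier rewrites to Suc 0. *)
sublocale norm_polys "ycoeff C 0" "ycoeff C (Suc 0)" "ycoeff C 2" "\<lambda>i. x (int i)" "\<lambda>i. x' (int i)"
  by unfold_locales (rule degree_ycoeff)+

lemma roots_at_y: "roots_at (y m) (x m) (x (m + 1))"
  and roots_at_y': "roots_at (y' m) (x' m) (x' (m + 1))"
  using biquad_vieta[OF biquad_at_y] biquad_vieta[OF biquad_at_y'] unfolding roots_at_def by simp_all

lemma tau_sigma_vanish_y:
  assumes "Suc j < n"
  shows "poly (tau n) (y (int j)) = 0" and "poly (sigma n) (y (int j)) = 0"
  using assms by (intro tau_sigma_vanish_at_roots[OF roots_at_y];
      force intro: exI[of _ j] exI[of _ "Suc j"])+

lemma tau_sigma_vanish_y':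
  assumes "Suc j < n"
  shows "poly (tau n) (y' (int j)) = 0" and "poly (sigma n) (y' (int j)) = 0"
  using assms by (intro tau_sigma_vanish_at_roots[OF roots_at_y'];
      force intro: exI[of _ j] exI[of _ "Suc j"])+

definition node_poly :: "nat \<Rightarrow> complex poly" where
  "node_poly k = (\<Prod>i<k. [:-y (int i), 1:] * [:-y' (int i), 1:])"

lemma poly_node_poly: "poly (node_poly k) z = (\<Prod>i<k. (z - y (int i)) * (z - y' (int i)))"
  unfolding node_poly_def poly_prod by (simp add: algebra_simps)

lemma poly_node_poly_Suc:
  "poly (node_poly (Suc k)) z = poly (node_poly k) z * ((z - y (int k)) * (z - y' (int k)))"
  unfolding poly_node_poly by simp

lemma poly_node_poly_nonzero:
  assumes "\<And>i. i < k \<Longrightarrow> z \<noteq> y (int i) \<and> z \<noteq> y' (int i)"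
  shows "poly (node_poly k) z \<noteq> 0"
  using assms unfolding poly_node_poly by auto

lemma lead_coeff_node_poly: "lead_coeff (node_poly k) = 1"
  unfolding node_poly_def lead_coeff_prod by (simp add: lead_coeff_mult)

lemma factor_out_nodes:
  assumes "\<And>i. i < k \<Longrightarrow> poly f (y (int i)) = 0 \<and> poly f (y' (int i)) = 0"
    and "degree f \<le> 2 * k + e"
  obtains g where "degree g \<le> e" and "f = g * node_poly k"
proof -
  define Y where "Y = (\<lambda>i. y (int i)) ` {..<k}"
  define Y' where "Y' = (\<lambda>i. y' (int i)) ` {..<k}"
  have disjoint: "Y \<inter> Y' = {}" and card: "card Y = k" "card Y' = k"
    unfolding Y_def Y'_def by (auto simp: card_image inj_on_def)
  have "(\<Prod>a\<in>Y. [:-a, 1:]) = (\<Prod>i<k. [:-y (int i), 1:])"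
    "(\<Prod>a\<in>Y'. [:-a, 1:]) = (\<Prod>i<k. [:-y' (int i), 1:])"
    unfolding Y_def Y'_def by (subst prod.reindex; simp add: inj_on_def)+
  moreover have "(\<Prod>a\<in>Y \<union> Y'. [:-a, 1:]) = (\<Prod>a\<in>Y. [:-a, 1:]) * (\<Prod>a\<in>Y'. [:-a, 1:])"
    using disjoint by (intro prod.union_disjoint) (auto simp: Y_def Y'_def)
  ultimately have "node_poly k = (\<Prod>a\<in>Y \<union> Y'. [:-a, 1:])"
    unfolding node_poly_def prod.distrib by (simp only:)
  moreover have "degree f \<le> card (Y \<union> Y') + e"
    using assms(2) card disjoint by (simp add: card_Un_disjoint Y_def Y'_def)
  ultimately show thesis
    using factor_out_roots[of "Y \<union> Y'" f e] assms(1) that by (auto simp: Y_def Y'_def)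
qed

definition kappa :: "nat \<Rightarrow> complex" where
  "kappa k = lead_coeff (tau (Suc k))"

lemma tau_Suc_eq: "tau (Suc k) = smult (kappa k) (node_poly k)"
proof -
  obtain g where g: "degree g \<le> 0" "tau (Suc k) = g * node_poly k"
  proof (rule factor_out_nodes[where f = "tau (Suc k)" and k = k and e = 0])
    show "poly (tau (Suc k)) (y (int i)) = 0 \<and> poly (tau (Suc k)) (y' (int i)) = 0" if "i < k" for i
      using that tau_sigma_vanish_y(1)[of i "Suc k"] tau_sigma_vanish_y'(1)[of i "Suc k"] by blast
    show "degree (tau (Suc k)) \<le> 2 * k + 0"
      using degree_tau_sigma[of k] by simp
  qed
  obtain c where "g = [:c:]"
    using g(1) degree_0_id by (metis le_zero_eq)
  with g(2) show ?thesis
    unfolding kappa_def by (simp add: lead_coeff_node_poly)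
qed

lemma kappa_0: "kappa 0 = x 0 - x' 0"
  by (simp add: kappa_def tau.simps(2))

lemma roots_at_y'_minus_1: "roots_at (y' (-1)) (x' (-1)) (x' 0)"
  using roots_at_y'[of "-1"] by simp

lemma sigma_at_y'_minus_1:
  "poly (sigma (Suc k)) (y' (-1)) = poly (tau (Suc k)) (y' (-1)) * (Y2 C (y' (-1)) * (x' 0 - x' (-1)) / 2)"
  using sigma_at_roots[of "y' (-1)" "x' 0" "x' (-1)" 0 "Suc k"] roots_at_y'_minus_1
  by (simp add: roots_at_commute)

lemma kappa_Suc:
  "kappa (Suc k) * (x (int k + 1) - x' (-1)) * (y' (int k) - y' (-1)) =
   kappa k * X2 C (x (int k + 1)) * (x' (int k + 1) - x' (-1)) * (y (int k + 1) - y' (-1))"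
proof -
  define j where "j = int k"
  define Y X A B D E F G where "Y = Y2 C (y' (-1))" and "X = X2 C (x (j + 1))"
    and "A = y' (-1) - y j" and "B = y' (-1) - y' j" and "D = x' (-1) - x' (j + 1)"
    and "E = x' 0 - x (j + 1)" and "F = x (j + 1) - x' (-1)" and "G = y' (-1) - y (j + 1)"
  have "poly (tau (Suc (Suc k))) (y' (-1)) = poly (tau (Suc k)) (y' (-1)) * (Y * D * E)"
    using tau_Suc_at_roots[OF roots_at_y'_minus_1, of "Suc k"] sigma_at_y'_minus_1[of k]
    by (simp add: Y_def D_def E_def j_def add.commute)
  moreover have "poly (node_poly k) (y' (-1)) \<noteq> 0"
    by (rule poly_node_poly_nonzero) auto
  ultimately have tau_step: "kappa (Suc k) * (A * B) = kappa k * (Y * D * E)"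
    unfolding tau_Suc_eq poly_smult poly_node_poly_Suc A_def B_def j_def by (simp add: mult_ac)
  have cross: "Y * F * - E = X * A * G"
    using Y2_X2_cross[of "-1" "j + 1"] by (simp add: Y_def X_def A_def E_def F_def G_def)
  have "A * (kappa (Suc k) * F * - B) = - F * (kappa (Suc k) * (A * B))"
    by (simp add: algebra_simps)
  also have "\<dots> = kappa k * D * (Y * F * - E)"
    unfolding tau_step by (simp add: algebra_simps)
  also have "\<dots> = A * (kappa k * X * - D * - G)"
    unfolding cross by (simp add: algebra_simps)
  finally have "A * (kappa (Suc k) * F * - B) = A * (kappa k * X * - D * - G)" .
  moreover have "A \<noteq> 0"
    by (simp add: A_def)
  ultimately have "kappa (Suc k) * F * - B = kappa k * X * - D * - G"
    by (metis mult_left_cancel)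
  then show ?thesis
    by (simp add: X_def B_def D_def F_def G_def j_def)
qed

definition basis :: "nat \<Rightarrow> complex \<Rightarrow> complex" where
  "basis n t = (\<Prod>i<n. (t - x (int i)) / (t - x' (int i)))"

definition ybasis :: "nat \<Rightarrow> complex \<Rightarrow> complex" where
  "ybasis n z = (\<Prod>i<n. (z - y (int i)) / (z - y' (int i)))"

definition X2_prod :: "nat \<Rightarrow> complex" where
  "X2_prod n = (\<Prod>i<n. X2 C (x' (int i)))"

lemma X2_prod_nonzero: "X2_prod n \<noteq> 0"
  by (simp add: X2_prod_def)

lemma X2_prod_Suc: "X2_prod (Suc n) = X2_prod n * X2 C (x' (int n))"
  by (simp add: X2_prod_def)

lemma norm_identity_basis:
  assumes "roots_at z u v" and "\<And>i. v \<noteq> x' i"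
  shows "poly (sigma n) z + poly (tau n) z * (Y2 C z * (v - u) / 2) =
         (\<Prod>i<n. Y2 C z * (u - x' (int i)) * (v - x' (int i))) * basis n v"
proof -
  have "poly (sigma n) z + poly (tau n) z * (Y2 C z * (v - u) / 2) =
        (\<Prod>i<n. Y2 C z * (u - x' (int i)) * (v - x (int i)))"
    using norm_identity[OF assms(1)] by simp
  also have "\<dots> = (\<Prod>i<n. Y2 C z * (u - x' (int i)) * (v - x' (int i))) * basis n v"
    unfolding basis_def prod.distrib[symmetric] using assms(2) by (intro prod.cong) auto
  finally show ?thesis .
qed

lemma prod_Y2_eq_X2_prod:
  "(\<Prod>i<n. Y2 C (y m) * (x m - x' (int i)) * (x (m + 1) - x' (int i))) =
   X2_prod n * (\<Prod>i<n. (y m - y' (int i - 1)) * (y m - y' (int i)))"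
proof -
  have "Y2 C (y m) * (x m - x' i) * (x (m + 1) - x' i) =
        X2 C (x' i) * ((y m - y' (i - 1)) * (y m - y' i))" for i
  proof -
    have "Y2 C (y m) * (x m - x' i) * (x (m + 1) - x' i) = Y2 C (y m) * (x' i - x m) * (x' i - x (m + 1))"
      by (simp add: algebra_simps)
    also have "\<dots> = X2 C (x' i) * ((y m - y' (i - 1)) * (y m - y' i))"
      unfolding Y2_X2_cross' by (simp only: mult.assoc)
    finally show ?thesis .
  qed
  then show ?thesis
    unfolding X2_prod_def prod.distrib[symmetric] by simp
qed

end

section \<open>The interpolation coefficients\<close>

locale elliptic_interpolation = elliptic_pair +
  fixes a :: complex
  assumes a_nonzero: "a \<noteq> 0"
    and x'_step: "x' 0 - x' (-1) = 2 / a"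
    and x_step_ne_2: "\<And>n::nat. a * (x (int n + 1) - x (int n)) \<noteq> 2"
begin

definition Phi :: "nat \<Rightarrow> complex poly" where
  "Phi n = ycoeff C 2 * tau n - smult a (sigma n)"

lemma poly_Phi_at_roots:
  assumes "poly (sigma n) z = poly (tau n) z * (Y2 C z * (u - v) / 2)"
  shows "poly (Phi n) z = poly (tau n) z * Y2 C z * (1 - a * (u - v) / 2)"
  unfolding Phi_def poly_diff poly_mult poly_smult assms by (simp add: algebra_simps)

lemma Phi_at_y'_minus_1: "poly (Phi (Suc k)) (y' (-1)) = 0"
  using poly_Phi_at_roots[OF sigma_at_y'_minus_1[of k]] a_nonzero by (simp add: x'_step)

lemma Phi_at_y:
  "poly (Phi (Suc k)) (y (int k)) =
   poly (tau (Suc k)) (y (int k)) * Y2 C (y (int k)) * (1 - a * (x (int k + 1) - x (int k)) / 2)"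
proof -
  have "roots_at (y (int k)) (x (int k + 1)) (x (int k))"
    using roots_at_y roots_at_commute by blast
  then have "poly (sigma (Suc k)) (y (int k)) =
      poly (tau (Suc k)) (y (int k)) * (Y2 C (y (int k)) * (x (int k + 1) - x (int k)) / 2)"
    using sigma_at_roots[of _ _ _ k "Suc k"] by simp
  then show ?thesis
    by (rule poly_Phi_at_roots)
qed

lemma Phi_at_y':
  "poly (Phi (Suc k)) (y' (int k)) =
   poly (tau (Suc k)) (y' (int k)) * Y2 C (y' (int k)) * (1 + a * (x' (int k + 1) - x' (int k)) / 2)"
proof -
  have sigma: "poly (sigma (Suc k)) (y' (int k)) =
      poly (tau (Suc k)) (y' (int k)) * (Y2 C (y' (int k)) * (x' (int k) - x' (int k + 1)) / 2)"
    using sigma_at_roots[OF roots_at_y', of k "Suc k"] by simp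
  show ?thesis
    unfolding poly_Phi_at_roots[OF sigma] by (simp add: field_simps)
qed

lemma Phi_vanish:
  assumes "j < k"
  shows "poly (Phi (Suc k)) (y (int j)) = 0" and "poly (Phi (Suc k)) (y' (int j)) = 0"
  using assms tau_sigma_vanish_y[of j "Suc k"] tau_sigma_vanish_y'[of j "Suc k"]
  by (simp_all add: Phi_def)

lemma degree_Phi: "degree (Phi (Suc k)) \<le> 2 * k + 2"
  unfolding Phi_def using degree_tau_sigma[of k] degree_ycoeff[of C 2]
    degree_mult_le[of "ycoeff C 2" "tau (Suc k)"]
  by (intro degree_diff_le order.trans[OF degree_smult_le]) auto

definition ell :: "nat \<Rightarrow> complex poly" where
  "ell k = Phi (Suc k) div ([:-y' (-1), 1:] * node_poly k)"

lemma Phi_Suc_eq: "Phi (Suc k) = [:-y' (-1), 1:] * ell k * node_poly k"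
  and degree_ell: "degree (ell k) \<le> 1"
proof -
  obtain P where P: "Phi (Suc k) = [:-y' (-1), 1:] * P"
    using Phi_at_y'_minus_1[of k] poly_eq_0_iff_dvd by blast
  have "degree P \<le> 2 * k + 1"
  proof (cases "P = 0")
    case False
    then have "degree (Phi (Suc k)) = degree P + 1"
      unfolding P by (subst degree_mult_eq) auto
    then show ?thesis using degree_Phi[of k] by simp
  qed simp
  moreover have "poly P (y (int j)) = 0 \<and> poly P (y' (int j)) = 0" if "j < k" for j
    using Phi_vanish[OF that] unfolding P by simp
  ultimately obtain g where g: "degree g \<le> 1" "P = g * node_poly k"
    using factor_out_nodes by metis
  have "node_poly k \<noteq> 0"
    using lead_coeff_node_poly[of k] by auto
  then have "[:-y' (-1), 1:] * node_poly k \<noteq> 0"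
    by (metis mult_eq_0_iff pCons_eq_0_iff zero_neq_one)
  moreover have "Phi (Suc k) = ([:-y' (-1), 1:] * node_poly k) * g"
    unfolding P g(2) by (simp only: mult_ac)
  ultimately have "ell k = g"
    unfolding ell_def by simp
  with P g show "Phi (Suc k) = [:-y' (-1), 1:] * ell k * node_poly k" and "degree (ell k) \<le> 1"
    by (simp_all only: mult.assoc)
qed

lemma ell_at_y:
  "poly (ell k) (y (int k)) * (y (int k) - y' (-1)) =
   kappa k * Y2 C (y (int k)) * (1 - a * (x (int k + 1) - x (int k)) / 2)"
proof -
  have "poly (node_poly k) (y (int k)) \<noteq> 0"
    by (rule poly_node_poly_nonzero) auto
  moreover have "poly (node_poly k) (y (int k)) * (poly (ell k) (y (int k)) * (y (int k) - y' (-1))) =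
      poly (node_poly k) (y (int k)) * (kappa k * Y2 C (y (int k)) * (1 - a * (x (int k + 1) - x (int k)) / 2))"
    using Phi_at_y[of k] unfolding Phi_Suc_eq tau_Suc_eq poly_mult poly_smult
    by (simp add: mult_ac)
  ultimately show ?thesis by simp
qed

lemma ell_at_y':
  "poly (ell k) (y' (int k)) * (y' (int k) - y' (-1)) =
   kappa k * Y2 C (y' (int k)) * (1 + a * (x' (int k + 1) - x' (int k)) / 2)"
proof -
  have "poly (node_poly k) (y' (int k)) \<noteq> 0"
    by (rule poly_node_poly_nonzero) auto
  moreover have "poly (node_poly k) (y' (int k)) * (poly (ell k) (y' (int k)) * (y' (int k) - y' (-1))) =
      poly (node_poly k) (y' (int k)) * (kappa k * Y2 C (y' (int k)) * (1 + a * (x' (int k + 1) - x' (int k)) / 2))"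
    using Phi_at_y'[of k] unfolding Phi_Suc_eq tau_Suc_eq poly_mult poly_smult
    by (simp add: mult_ac)
  ultimately show ?thesis by simp
qed

lemma basis_step:
  fixes m :: int
  defines "d \<equiv> x (m + 1) - x m"
  shows "(1 - a * d / 2) * basis n (x (m + 1)) - (1 + a * d / 2) * basis n (x m) =
         d * poly (Phi n) (y m) /
         (X2_prod n * (\<Prod>i<n. (y m - y' (int i - 1)) * (y m - y' (int i))))"
proof -
  define u v z where "u = x m" and "v = x (m + 1)" and "z = y m"
  define G where "G = (\<Prod>i<n. Y2 C z * (u - x' (int i)) * (v - x' (int i)))"
  have plus: "poly (sigma n) z + poly (tau n) z * (Y2 C z * (v - u) / 2) = G * basis n v"
    using norm_identity_basis[OF roots_at_y[of m]] by (simp add: G_def u_def v_def z_def)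
  have minus: "poly (sigma n) z + poly (tau n) z * (Y2 C z * (u - v) / 2) = G * basis n u"
    using norm_identity_basis[of z v u] roots_at_y[of m] roots_at_commute
    by (simp add: G_def u_def v_def z_def mult_ac)
  have "G * ((1 - a * d / 2) * basis n v - (1 + a * d / 2) * basis n u) =
        (1 - a * d / 2) * (G * basis n v) - (1 + a * d / 2) * (G * basis n u)"
    by (simp add: algebra_simps)
  also have "\<dots> = d * (Y2 C z * poly (tau n) z - a * poly (sigma n) z)"
    unfolding plus[symmetric] minus[symmetric] d_def u_def[symmetric] v_def[symmetric]
    by (simp add: field_simps)
  also have "\<dots> = d * poly (Phi n) z"
    by (simp add: Phi_def)
  finally have "G * ((1 - a * d / 2) * basis n v - (1 + a * d / 2) * basis n u) = d * poly (Phi n) z" .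
  moreover have G: "G = X2_prod n * (\<Prod>i<n. (z - y' (int i - 1)) * (z - y' (int i)))"
    unfolding G_def u_def v_def z_def by (rule prod_Y2_eq_X2_prod)
  moreover have "G \<noteq> 0"
    unfolding G by (auto simp: X2_prod_nonzero z_def)
  ultimately show ?thesis
    unfolding u_def v_def z_def by (simp add: field_simps)
qed

lemma basis_step_Suc:
  fixes m :: int
  defines "d \<equiv> x (m + 1) - x m"
  shows "(1 - a * d / 2) * basis (Suc k) (x (m + 1)) - (1 + a * d / 2) * basis (Suc k) (x m) =
         d * poly (ell k) (y m) * ybasis k (y m) / (X2_prod (Suc k) * (y m - y' (int k)))"
proof -
  define z where "z = y m"
  define A B where "A = (\<Prod>i<k. z - y (int i))" and "B = (\<Prod>i<k. z - y' (int i))"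
  define e e' where "e = z - y' (-1)" and "e' = z - y' (int k)"
  have "(\<Prod>i<Suc k. (z - y' (int i - 1)) * (z - y' (int i))) =
        (\<Prod>i<Suc k. z - y' (int i - 1)) * (\<Prod>i<Suc k. z - y' (int i))"
    by (rule prod.distrib)
  also have "\<dots> = (e * B) * (B * e')"
    unfolding prod.lessThan_Suc_shift[of "\<lambda>i. z - y' (int i - 1)"] B_def e_def e'_def by simp
  finally have denominator: "(\<Prod>i<Suc k. (z - y' (int i - 1)) * (z - y' (int i))) = (e * B) * (B * e')" .
  have numerator: "poly (Phi (Suc k)) z = e * poly (ell k) z * (A * B)"
    unfolding Phi_Suc_eq poly_mult poly_node_poly A_def B_def e_def prod.distrib by simp
  have ybasis: "ybasis k z = A / B"
    unfolding ybasis_def A_def B_def prod_dividef ..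
  have "e \<noteq> 0" and "e' \<noteq> 0" and "B \<noteq> 0"
    unfolding z_def B_def e_def e'_def by auto
  then show ?thesis
    unfolding basis_step[of m, folded d_def] z_def[symmetric] numerator denominator ybasis e'_def[symmetric]
    using X2_prod_nonzero by (simp add: field_simps)
qed

definition eta :: "nat \<Rightarrow> complex" where
  "eta j = ((x (int j) - x' (-1)) * (1 + a * (x' (int j) - x' (int j - 1)) / 2)) /
           ((x' (int j) - x' (-1)) * (1 - a * (x (int j + 1) - x (int j)) / 2))"

definition closed_coeff :: "nat \<Rightarrow> complex" where
  "closed_coeff n = (x (int n) - x' (int n - 1)) / (x 0 - x' (-1)) * (\<Prod>j<n. eta j)"

lemma step_factor_nonzero: "1 - a * (x (int n + 1) - x (int n)) / 2 \<noteq> 0"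
  using x_step_ne_2[of n] by (auto simp: field_simps)

lemma closed_coeff_0: "closed_coeff 0 = 1"
  by (simp add: closed_coeff_def)

lemma closed_coeff_Suc:
  "closed_coeff (Suc n) * (x (int n) - x' (int n - 1)) = closed_coeff n * (x (int n + 1) - x' (int n)) * eta n"
  by (simp add: closed_coeff_def field_simps)

text \<open>Partial fractions: \<open>closed_coeff (k + 1) * ell k z / (X2_prod (k + 1) * (z - y k) * (z - y' k)) =
  weight (k + 2) / (z - y' k) - weight (k + 1) / (z - y k)\<close>, the first coefficient being
  identified by \<open>weight_Suc_Suc\<close>.\<close>
fun weight :: "nat \<Rightarrow> complex" where
  "weight 0 = 0"
| "weight (Suc k) =
     closed_coeff (Suc k) * poly (ell k) (y (int k)) / (X2_prod (Suc k) * (y' (int k) - y (int k)))"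

lemma weight_1: "weight (Suc 0) = - a"
proof -
  define M where "M = 1 - a * (x 1 - x 0) / 2"
  have "M \<noteq> 0"
    using step_factor_nonzero[of 0] by (simp add: M_def)
  have "eta 0 = (x 0 - x' (-1)) * (1 + a * (2 / a) / 2) / ((2 / a) * M)"
    by (simp add: eta_def M_def x'_step)
  also have "\<dots> = a * (x 0 - x' (-1)) / M"
    using a_nonzero \<open>M \<noteq> 0\<close> by (simp add: field_simps)
  finally have coeff: "closed_coeff (Suc 0) = a * (x 1 - x' 0) / M"
    by (simp add: closed_coeff_def)
  define D D' where "D = y' 0 - y 0" and "D' = y 0 - y' (-1)"
  have "D \<noteq> 0" and "D' \<noteq> 0" and "X2 C (x' 0) \<noteq> 0"
    by (simp_all add: D_def D'_def)
  have ell: "poly (ell 0) (y 0) = (x 0 - x' 0) * Y2 C (y 0) * M / D'"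
    using ell_at_y[of 0] \<open>D' \<noteq> 0\<close> by (simp add: kappa_0 M_def D'_def field_simps)
  have cross: "(x 1 - x' 0) * (x 0 - x' 0) * Y2 C (y 0) = - X2 C (x' 0) * D' * D"
    using Y2_X2_cross'[of 0 0] by (simp add: D_def D'_def algebra_simps)
  have "weight (Suc 0) = closed_coeff (Suc 0) * poly (ell 0) (y 0) / (X2 C (x' 0) * D)"
    by (simp add: X2_prod_def D_def)
  also have "\<dots> = a * ((x 1 - x' 0) * (x 0 - x' 0) * Y2 C (y 0)) / (X2 C (x' 0) * D * D')"
    unfolding coeff ell using \<open>M \<noteq> 0\<close> \<open>D \<noteq> 0\<close> \<open>D' \<noteq> 0\<close> \<open>X2 C (x' 0) \<noteq> 0\<close>
    by (simp add: field_simps)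
  also have "\<dots> = - a"
    unfolding cross using \<open>D \<noteq> 0\<close> \<open>D' \<noteq> 0\<close> \<open>X2 C (x' 0) \<noteq> 0\<close> by (simp add: field_simps)
  finally show ?thesis .
qed

lemma closed_coeff_kappa_Suc:
  "closed_coeff (Suc (Suc k)) * kappa (Suc k) * (1 - a * (x (int k + 2) - x (int k + 1)) / 2) =
   closed_coeff (Suc k) * kappa k * (1 + a * (x' (int k + 1) - x' (int k)) / 2) * X2 C (x (int k + 1)) *
   (x (int k + 2) - x' (int k + 1)) * (y (int k + 1) - y' (-1)) /
   ((x (int k + 1) - x' (int k)) * (y' (int k) - y' (-1)))"
proof -
  define j where "j = int k"
  define P M c c' \<kappa> \<kappa>' where "P = 1 + a * (x' (j + 1) - x' j) / 2"
    and "M = 1 - a * (x (j + 2) - x (j + 1)) / 2"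
    and "c = closed_coeff (Suc k)" and "c' = closed_coeff (Suc (Suc k))"
    and "\<kappa> = kappa k" and "\<kappa>' = kappa (Suc k)"
  define A B D E F G where "A = y' j - y' (-1)" and "B = x (j + 1) - x' j"
    and "D = x' (j + 1) - x' (-1)" and "E = x (j + 1) - x' (-1)" and "F = x (j + 2) - x' (j + 1)"
    and "G = y (j + 1) - y' (-1)"
  define X where "X = X2 C (x (j + 1))"
  have nonzero: "M \<noteq> 0" "A \<noteq> 0" "B \<noteq> 0" "D \<noteq> 0" "E \<noteq> 0"
    using step_factor_nonzero[of "Suc k"]
    by (simp_all add: M_def A_def B_def D_def E_def j_def add.commute)
  have "c' * B = c * F * (E * P / (D * M))"
    using closed_coeff_Suc[of "Suc k", unfolded eta_def]
    by (simp add: c'_def c_def B_def D_def E_def F_def P_def M_def j_def add.commute)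
  then have c': "c' = c * F * E * P / (B * D * M)"
    using nonzero by (simp add: field_simps)
  have "\<kappa>' * E * A = \<kappa> * X * D * G"
    using kappa_Suc[of k] by (simp add: \<kappa>'_def \<kappa>_def A_def D_def E_def G_def X_def j_def)
  then have \<kappa>': "\<kappa>' = \<kappa> * X * D * G / (E * A)"
    using nonzero by (simp add: field_simps)
  have "c' * \<kappa>' * M = c * \<kappa> * P * X * F * G / (B * A)"
    unfolding c' \<kappa>' using nonzero by (simp add: field_simps)
  then show ?thesis
    by (simp add: c'_def c_def \<kappa>'_def \<kappa>_def P_def M_def F_def G_def X_def A_def B_def j_def add.commute)
qed

text \<open>The closed form of the coefficients is tailored to this identity.\<close>
lemma weight_Suc_Suc:
  "closed_coeff (Suc k) * poly (ell k) (y' (int k)) / (X2_prod (Suc k) * (y' (int k) - y (int k))) =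
   weight (Suc (Suc k))"
proof -
  define j where "j = int k"
  define P M where "P = 1 + a * (x' (j + 1) - x' j) / 2" and "M = 1 - a * (x (j + 2) - x (j + 1)) / 2"
  define K K' where "K = closed_coeff (Suc k) * kappa k"
    and "K' = closed_coeff (Suc (Suc k)) * kappa (Suc k)"
  define X Xx Xx' where "X = X2_prod (Suc k)" and "Xx = X2 C (x (j + 1))" and "Xx' = X2 C (x' (j + 1))"
  define Y Y' where "Y = Y2 C (y' j)" and "Y' = Y2 C (y (j + 1))"
  define A A' B B' F D D' E where "A = y' j - y' (-1)" and "A' = y (j + 1) - y' (-1)"
    and "B = x (j + 1) - x' j" and "B' = x (j + 1) - x' (j + 1)" and "F = x (j + 2) - x' (j + 1)"
    and "D = y' j - y j" and "D' = y' (j + 1) - y (j + 1)" and "E = y' j - y (j + 1)"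
  have nonzero: "M \<noteq> 0" "X \<noteq> 0" "Xx' \<noteq> 0" "A \<noteq> 0" "A' \<noteq> 0" "B \<noteq> 0" "B' \<noteq> 0" "F \<noteq> 0"
    "D \<noteq> 0" "D' \<noteq> 0"
    using step_factor_nonzero[of "Suc k"] X2_prod_nonzero[of "Suc k"]
    by (simp_all add: M_def X_def Xx'_def A_def A'_def B_def B'_def F_def D_def D'_def j_def add.commute)
  have "K' * M = K * P * Xx * F * A' / (B * A)"
    using closed_coeff_kappa_Suc[of k]
    by (simp add: K'_def K_def M_def P_def Xx_def F_def A'_def B_def A_def j_def mult.assoc add.commute)
  then have K': "K' = K * P * Xx * F * A' / (B * A * M)"
    using nonzero by (simp add: field_simps)
  have "closed_coeff (Suc k) * poly (ell k) (y' j) * A = K * Y * P"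
    using ell_at_y'[of k] by (simp add: K_def A_def Y_def P_def j_def mult.assoc)
  then have left: "closed_coeff (Suc k) * poly (ell k) (y' j) = K * Y * P / A"
    using nonzero by (simp add: field_simps)
  have "closed_coeff (Suc (Suc k)) * poly (ell (Suc k)) (y (j + 1)) * A' = K' * Y' * M"
    using ell_at_y[of "Suc k"] by (simp add: K'_def A'_def Y'_def M_def j_def mult.assoc add.commute)
  then have right: "closed_coeff (Suc (Suc k)) * poly (ell (Suc k)) (y (j + 1)) = K' * Y' * M / A'"
    using nonzero by (simp add: field_simps)
  have "Y * B * B' = Xx * D * E"
    using Y2_X2_cross[of j "j + 1"] by (simp add: Y_def Xx_def B_def B'_def D_def E_def)
  then have Y: "Y = Xx * D * E / (B * B')"
    using nonzero by (simp add: field_simps)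
  have "Y' * - B' * - F = Xx' * - E * - D'"
    using Y2_X2_cross'[of "j + 1" "j + 1"] by (simp add: Y'_def Xx'_def B'_def F_def E_def D'_def add.commute)
  then have Y': "Y' = Xx' * E * D' / (B' * F)"
    using nonzero by (simp add: field_simps)
  have "closed_coeff (Suc k) * poly (ell k) (y' j) / (X * D) =
        closed_coeff (Suc (Suc k)) * poly (ell (Suc k)) (y (j + 1)) / (X * Xx' * D')"
    unfolding left right K' Y Y' using nonzero by (simp add: field_simps)
  then show ?thesis
    by (simp add: X_def Xx'_def D_def D'_def X2_prod_Suc j_def add.commute)
qed

lemma closed_coeff_basis_step:
  fixes m :: int
  defines "d \<equiv> x (m + 1) - x m"
  shows "closed_coeff n * ((1 - a * d / 2) * basis n (x (m + 1)) - (1 + a * d / 2) * basis n (x m)) =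
         d * (weight (Suc n) * ybasis n (y m) - weight n * ybasis (n - 1) (y m))"
proof (cases n)
  case 0
  then show ?thesis
    using weight_1 by (simp add: closed_coeff_0 basis_def ybasis_def algebra_simps)
next
  case (Suc k)
  define z c X D e where "z = y m" and "c = closed_coeff (Suc k)" and "X = X2_prod (Suc k)"
    and "D = y' (int k) - y (int k)" and "e = z - y' (int k)"
  define w w' where "w = weight (Suc k)" and "w' = weight (Suc (Suc k))"
  have "D \<noteq> 0" and "e \<noteq> 0" and "X \<noteq> 0"
    using X2_prod_nonzero by (simp_all add: D_def e_def z_def X_def)
  have w: "c * poly (ell k) (y (int k)) = w * (X * D)"
    and w': "c * poly (ell k) (y' (int k)) = w' * (X * D)"
    using \<open>D \<noteq> 0\<close> \<open>X \<noteq> 0\<close> weight_Suc_Suc[of k]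
    by (simp_all add: c_def X_def D_def w_def w'_def field_simps)
  have "c * poly (ell k) z * D =
        c * (poly (ell k) (y' (int k)) * (z - y (int k)) - poly (ell k) (y (int k)) * e)"
    using poly_linear_interpolation[OF degree_ell, of k z "y' (int k)" "y (int k)", folded D_def e_def]
    by (simp only: mult.assoc)
  also have "\<dots> = X * (w' * (z - y (int k)) - w * e) * D"
    unfolding right_diff_distrib mult.assoc[symmetric] w w' by (simp add: algebra_simps)
  finally have partial_fractions: "c * poly (ell k) z = X * (w' * (z - y (int k)) - w * e)"
    using \<open>D \<noteq> 0\<close> by simp
  have ybasis_Suc: "ybasis (Suc k) z = ybasis k z * (z - y (int k)) / e"
    by (simp add: ybasis_def e_def)
  have "closed_coeff n * ((1 - a * d / 2) * basis n (x (m + 1)) - (1 + a * d / 2) * basis n (x m)) =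
        d * ybasis k z * (c * poly (ell k) z) / (X * e)"
    unfolding Suc basis_step_Suc[of m, folded d_def]
    by (simp add: z_def c_def X_def e_def mult_ac)
  also have "\<dots> = d * (w' * (ybasis k z * (z - y (int k)) / e) - w * ybasis k z)"
    unfolding partial_fractions using \<open>e \<noteq> 0\<close> \<open>X \<noteq> 0\<close> by (simp add: field_simps)
  finally show ?thesis
    unfolding Suc ybasis_Suc[symmetric] by (simp add: w_def w'_def z_def)
qed

lemma sum_closed_coeff_basis_step:
  fixes m :: nat
  defines "d \<equiv> x (int m + 1) - x (int m)"
  shows "(\<Sum>n\<le>Suc m. closed_coeff n *
           ((1 - a * d / 2) * basis n (x (int m + 1)) - (1 + a * d / 2) * basis n (x (int m)))) = 0"
proof -
  define h where "h n = weight n * ybasis (n - 1) (y (int m))" for n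
  have "ybasis (Suc m) (y (int m)) = 0"
    unfolding ybasis_def by (subst prod_zero_iff) auto
  then have "h (Suc (Suc m)) = 0" and "h 0 = 0"
    by (simp_all add: h_def)
  moreover have "(\<Sum>n\<le>Suc m. closed_coeff n *
           ((1 - a * d / 2) * basis n (x (int m + 1)) - (1 + a * d / 2) * basis n (x (int m)))) =
        d * (\<Sum>n<Suc (Suc m). h (Suc n) - h n)"
    unfolding d_def h_def closed_coeff_basis_step sum_distrib_left lessThan_Suc_atMost by simp
  ultimately show ?thesis
    unfolding sum_lessThan_telescope by simp
qed

definition interpolant :: "nat \<Rightarrow> complex" where
  "interpolant m = (\<Sum>n\<le>m. closed_coeff n * basis n (x (int m)))"

lemma interpolant_0: "interpolant 0 = 1"
  by (simp add: interpolant_def closed_coeff_0 basis_def)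

lemma interpolant_Suc:
  fixes m :: nat
  defines "d \<equiv> x (int m + 1) - x (int m)"
  shows "(1 - a * d / 2) * interpolant (Suc m) = (1 + a * d / 2) * interpolant m"
proof -
  have "basis (Suc m) (x (int m)) = 0"
    unfolding basis_def by (subst prod_zero_iff) auto
  then have "(\<Sum>n\<le>Suc m. closed_coeff n * basis n (x (int m))) = interpolant m"
    by (simp add: interpolant_def)
  moreover have "(\<Sum>n\<le>Suc m. closed_coeff n * basis n (x (int m + 1))) = interpolant (Suc m)"
    by (simp add: interpolant_def add.commute)
  moreover have "(\<Sum>n\<le>Suc m. closed_coeff n *
           ((1 - a * d / 2) * basis n (x (int m + 1)) - (1 + a * d / 2) * basis n (x (int m)))) =
        (1 - a * d / 2) * (\<Sum>n\<le>Suc m. closed_coeff n * basis n (x (int m + 1))) -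
        (1 + a * d / 2) * (\<Sum>n\<le>Suc m. closed_coeff n * basis n (x (int m)))"
    by (simp only: sum_subtractf sum_distrib_left right_diff_distrib mult.left_commute)
  ultimately show ?thesis
    using sum_closed_coeff_basis_step[of m, folded d_def] by simp
qed

lemma solution_eq_interpolant:
  assumes "\<And>n::nat. Dop x f (int n) = a * Mop x f (int n)"
  shows "f (x (int m)) = f (x 0) * interpolant m"
proof (induction m)
  case 0
  then show ?case by (simp add: interpolant_0)
next
  case (Suc m)
  define d where "d = x (int m + 1) - x (int m)"
  have "d \<noteq> 0"
    by (simp add: d_def)
  moreover have "(f (x (int m + 1)) - f (x (int m))) / d = a * ((f (x (int m)) + f (x (int m + 1))) / 2)"
    using assms[of m] unfolding Dop_def Mop_def d_def .
  ultimately have "(1 - a * d / 2) * f (x (int m + 1)) = (1 + a * d / 2) * f (x (int m))"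
    by (simp add: field_simps)
  also have "\<dots> = f (x 0) * ((1 + a * d / 2) * interpolant m)"
    by (simp add: Suc.IH mult_ac)
  also have "\<dots> = (1 - a * d / 2) * (f (x 0) * interpolant (Suc m))"
    unfolding interpolant_Suc[of m, folded d_def, symmetric] by (rule mult.left_commute)
  finally show ?case
    using step_factor_nonzero[of m] by (simp add: d_def add.commute)
qed

lemma basis_diagonal_nonzero: "basis n (x (int n)) \<noteq> 0"
  by (simp add: basis_def)

end

theorem mainTheorem10:
  fixes C :: "nat \<Rightarrow> nat \<Rightarrow> complex"
    and x y x' y' :: "int \<Rightarrow> complex"
    and a :: complex and f :: "complex \<Rightarrow> complex" and c :: "nat \<Rightarrow> complex"
  assumes ell: "elliptic_seq C x y" and ell': "elliptic_seq C x' y'"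
    and gp: "general_position C x y x' y'"
    and a_nz: "a \<noteq> 0"
    and step': "x' 0 - x' (-1) = 2 / a"
    and f0: "f (x 0) \<noteq> 0"
    and ne2: "\<And>n::nat. a * (x (int n + 1) - x (int n)) \<noteq> 2"
    and feq: "\<And>n::nat. Dop x f (int n) = a * Mop x f (int n)"
    and interp: "\<And>N k::nat. k \<le> N \<Longrightarrow>
        (\<Sum>n\<le>N. c n * (\<Prod>i<n. (x (int k) - x (int i)) / (x (int k) - x' (int i)))) = f (x (int k))"
  shows "\<forall>n::nat. c n =
           (x (int n) - x' (int n - 1)) / (x 0 - x' (-1)) *
           (\<Prod>j<n. ((x (int j) - x' (-1)) * (1 + a * (x' (int j) - x' (int j - 1)) / 2)) /
                     ((x' (int j) - x' (-1)) * (1 - a * (x (int j + 1) - x (int j)) / 2))) * c 0"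
proof -
  interpret elliptic_interpolation C x y x' y' a
    using ell ell' gp a_nz step' ne2
    by (intro elliptic_interpolation.intro elliptic_pair.intro elliptic_interpolation_axioms.intro)
  have c0: "c 0 = f (x 0)"
    using interp[of 0 0] by simp
  have "c n = closed_coeff n * c 0" for n
  proof (rule lower_triangular_solution_unique[where R = "\<lambda>n k. basis n (x (int k))"
        and c = c and d = "\<lambda>n. closed_coeff n * c 0"])
    show "basis n (x (int n)) \<noteq> 0" for n
      by (rule basis_diagonal_nonzero)
    show "(\<Sum>n\<le>k. c n * basis n (x (int k))) = (\<Sum>n\<le>k. closed_coeff n * c 0 * basis n (x (int k)))" for k
      using interp[of k k] solution_eq_interpolant[OF feq, of k] c0
      unfolding basis_def interpolant_def by (simp add: sum_distrib_left mult_ac)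
  qed
  then show ?thesis
    unfolding closed_coeff_def eta_def by blast
qed

end
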